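(* For $x\in\mathbb{C}^3$ the following are equivalent: (1) $x\in K_0$; (2) $x$ is a peak point of $\overline{\mathcal{P}}$; (3) $x$ belongs to the distinguished boundary $b\mathcal{P}$ of $\mathcal{P}$. Consequently $$b\mathcal{P}=\{(a,s,p)\in\mathbb{C}^3:(s,p)\in b\Gamma,\ |a|=\sqrt{1-\tfrac14|s|^2}\}=\{(a,s,p)\in\mathbb{C}^3: |s|\le2,\ |p|=1,\ s=\bar sp,\ |a|=\sqrt{1-\tfrac14|s|^2}\}.$$
   Context: $\mathbb{T}$ is the unit circle, $b\Gamma=\{(z_1+z_2,z_1z_2):z_1,z_2\in\mathbb{T}\}$, and $K_0=\{(a,s,p):(s,p)\in b\Gamma,\ |a|=\sqrt{1-\tfrac14|s|^2}\}$. $\mathbb{B}$ is the open unit ball of $\mathbb{C}^{2\times2}$ (operator norm), $\pi(A)=(a_{21},\operatorname{tr}A,\det A)$, $\mathcal{P}=\pi(\mathbb{B})$, $\overline{\mathcal{P}}$ its closure. $A(\mathcal{P})$ is the algebra of continuous functions on $\overline{\mathcal{P}}$ holomorphic on $\mathcal{P}$. A closed boundary is a closed subset $C\subset\overline{\mathcal{P}}$ on which every $f\in A(\mathcal{P})$ attains its maximum modulus; the distinguished (Shilov) boundary $b\mathcal{P}$ is the smallest closed boundary (which exists since $\overline{\mathcal{P}}$ is polynomially convex). A point $u\in\overline{\mathcal{P}}$ is a peak point if there is $g\in A(\mathcal{P})$ with $g(u)=1$ and $|g(x)|<1$ for all $x\in\overline{\mathcal{P}}\setminus\{u\}$. *)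

theory Defs
  imports "HOL-Analysis.Analysis"
begin

type_synonym c3 = "complex \<times> complex \<times> complex"

definition bGamma :: "(complex \<times> complex) set" where
  "bGamma = {(z1 + z2, z1 * z2) | z1 z2. cmod z1 = 1 \<and> cmod z2 = 1}"

definition K0 :: "c3 set" where
  "K0 = {(a, s, p). (s, p) \<in> bGamma \<and> cmod a = sqrt (1 - (cmod s)\<^sup>2 / 4)}"

definition mat_ball :: "(complex^2^2) set" where
  "mat_ball = {A. onorm (\<lambda>x. A *v x) < 1}"

definition piP :: "complex^2^2 \<Rightarrow> c3" where
  "piP A = (A $ 2 $ 1, A $ 1 $ 1 + A $ 2 $ 2, det A)"

definition Pent :: "c3 set" where
  "Pent = piP ` mat_ball"

definition c3_scale :: "complex \<Rightarrow> c3 \<Rightarrow> c3" where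
  "c3_scale c v = (c * fst v, c * fst (snd v), c * snd (snd v))"

text \<open>Holomorphic in several variables: complex Frechet differentiable, i.e. the
  (real) Frechet derivative exists and is complex linear.\<close>
definition holo3_on :: "(c3 \<Rightarrow> complex) \<Rightarrow> c3 set \<Rightarrow> bool" where
  "holo3_on f U \<longleftrightarrow> (\<forall>z\<in>U. \<exists>L. (f has_derivative L) (at z) \<and>
      (\<forall>c v. L (c3_scale c v) = c * L v))"

definition AP :: "(c3 \<Rightarrow> complex) set" where
  "AP = {f. continuous_on (closure Pent) f \<and> holo3_on f Pent}"

definition closed_boundary :: "c3 set \<Rightarrow> bool" where
  "closed_boundary C \<longleftrightarrow> closed C \<and> C \<subseteq> closure Pent \<and>
     (\<forall>f\<in>AP. \<exists>x\<in>C. \<forall>y\<in>closure Pent. cmod (f y) \<le> cmod (f x))"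

definition distinguished_boundary :: "c3 set" where
  "distinguished_boundary = (THE C. closed_boundary C \<and> (\<forall>C'. closed_boundary C' \<longrightarrow> C \<subseteq> C'))"

definition peak_point :: "c3 \<Rightarrow> bool" where
  "peak_point u \<longleftrightarrow> u \<in> closure Pent \<and>
     (\<exists>g\<in>AP. g u = 1 \<and> (\<forall>x\<in>closure Pent - {u}. cmod (g x) < 1))"

end

theory Submission
  imports Defs "HOL-Complex_Analysis.Conformal_Mappings"
begin

(* The closed unit ball of 2x2 matrices is compact and pi maps it onto
       the closure of P; on it |a|^2 + |s|^2/4 <= 1 and |p| <= 1.  Radial scaling
       (a,s,p) -> (r a, r s, r^2 p), r < 1, moves the closure into P itself.
   (2) Maximum principle on analytic discs.  Composing f in A(P) with a scaled analytic disc
       in the closure gives a holomorphic function of one variable; letting r -> 1 shows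
       that |f| on the disc is bounded by its bound on the boundary circle.
   (3) Every contraction is Y diag(z1,z2) X^* with unitary X, Y and |z1|,|z2| <= 1
       (a hands-on singular value decomposition).  Varying z1 and z2 over the unit disc
       gives analytic discs; together with discs inside the fibres over bGamma this shows
       that K0 is a closed boundary.
   (4) Every point of K0 is a peak point, via explicit peak functions; and a peak point
       lies in every closed boundary.  Hence K0 is the smallest closed boundary, i.e. the
       distinguished boundary, and it coincides with the set of peak points.
   The description of bGamma as {|s| <= 2, |p| = 1, s = conj(s) p} gives the last
   equality of the theorem. *)

text \<open>Vector indexing and power series coefficients share the symbol \<open>$\<close>; only the
  former is used here, so the latter is hidden to keep terms unambiguous.\<close>
no_notation fps_nth (infixl \<open>$\<close> 75)

lemma of_real_cmod_sq: "(complex_of_real (cmod z))^2 = z * cnj z"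
  by (metis complex_norm_square of_real_power)

lemma unimodular_mult_cnj: "cmod z = 1 \<Longrightarrow> z * cnj z = 1"
  by (metis of_real_cmod_sq of_real_1 one_power2)

definition unit_pair :: "complex \<Rightarrow> complex \<Rightarrow> bool" where
  "unit_pair x1 x2 \<longleftrightarrow> (cmod x1)^2 + (cmod x2)^2 = 1"

lemma unit_pair_mult_cnj: "unit_pair x1 x2 \<Longrightarrow> x1*cnj x1 + x2*cnj x2 = 1"
  unfolding unit_pair_def by (metis of_real_cmod_sq of_real_1 of_real_add of_real_power)

text \<open>Real identities between moduli are proved by passing to products z * cnj z
  in the complex numbers.  Cauchy-Schwarz in C^2 follows from Lagrange's identity: the
  defect equals |a cnj e - c cnj d|^2.\<close>
lemma cauchy_schwarz_2:
  "(cmod (a*d + c*e))^2 \<le> ((cmod a)^2 + (cmod c)^2) * ((cmod d)^2 + (cmod e)^2)"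
proof -
  have "complex_of_real (((cmod a)^2 + (cmod c)^2) * ((cmod d)^2 + (cmod e)^2) - (cmod (a*d + c*e))^2)
      = complex_of_real ((cmod (a*cnj e - c*cnj d))^2)"
    unfolding of_real_mult of_real_add of_real_diff of_real_power of_real_cmod_sq
    by (simp add: algebra_simps)
  hence "((cmod a)^2 + (cmod c)^2) * ((cmod d)^2 + (cmod e)^2) - (cmod (a*d + c*e))^2
         = (cmod (a*cnj e - c*cnj d))^2"
    using of_real_eq_iff by blast
  thus ?thesis using zero_le_power2[of "cmod (a*cnj e - c*cnj d)"] by linarith
qed

lemma parallelogram_law:
  "(cmod (w1+w2))^2 + (cmod (w1-w2))^2 = 2*(cmod w1)^2 + 2*(cmod w2)^2"
  by (rule of_real_eq_iff[where 'a=complex, THEN iffD1],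
      unfold of_real_mult of_real_add of_real_power of_real_cmod_sq) (simp add: algebra_simps)

lemma norm_le_one_iff_sq: "cmod s \<le> 1 \<longleftrightarrow> (cmod s)^2 \<le> 1"
  by (simp add: power_le_one_iff abs_le_square_iff)

section \<open>Contractions of C^2 and the closure of the pentablock\<close>

lemma norm_vec2_sq: "(norm (x::'a::real_normed_vector^2))^2 = (norm (x$1))^2 + (norm (x$2))^2"
  by (simp add: norm_vec_def L2_set_def sum_2)

lemma matrix_vector_mult_2: fixes A :: "complex^2^2" shows
  "(A *v x) $ 1 = A$1$1 * x$1 + A$1$2 * x$2"
  "(A *v x) $ 2 = A$2$1 * x$1 + A$2$2 * x$2"
  by (simp_all add: matrix_vector_mult_def sum_2)

text \<open>The matrix with entries a, b (first row) and c, d (second row) has norm at most 1.\<close>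
definition contractive :: "complex \<Rightarrow> complex \<Rightarrow> complex \<Rightarrow> complex \<Rightarrow> bool" where
  "contractive a b c d \<longleftrightarrow>
     (\<forall>x y. (cmod (a*x+b*y))\<^sup>2 + (cmod (c*x+d*y))\<^sup>2 \<le> (cmod x)\<^sup>2 + (cmod y)\<^sup>2)"

definition contractions :: "(complex^2^2) set" where
  "contractions = {A. \<forall>x. norm (A *v x) \<le> norm x}"

lemma contractions_iff: "A \<in> contractions \<longleftrightarrow> contractive (A$1$1) (A$1$2) (A$2$1) (A$2$2)"
proof
  assume A: "A \<in> contractions"
  show "contractive (A$1$1) (A$1$2) (A$2$1) (A$2$2)" unfolding contractive_def
  proof (intro allI)
    fix x y
    define v :: "complex^2" where "v = vector [x, y]"
    have "norm (A *v v) \<le> norm v" using A by (auto simp: contractions_def)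
    hence "(norm (A *v v))^2 \<le> (norm v)^2" by (rule power_mono) simp
    thus "(cmod (A$1$1*x+A$1$2*y))\<^sup>2 + (cmod (A$2$1*x+A$2$2*y))\<^sup>2 \<le> (cmod x)\<^sup>2 + (cmod y)\<^sup>2"
      by (simp add: norm_vec2_sq matrix_vector_mult_2 v_def)
  qed
next
  assume c: "contractive (A$1$1) (A$1$2) (A$2$1) (A$2$2)"
  show "A \<in> contractions" unfolding contractions_def
  proof safe
    fix v :: "complex^2"
    have "(norm (A *v v))^2 \<le> (norm v)^2" using c unfolding contractive_def
      by (simp add: norm_vec2_sq matrix_vector_mult_2)
    thus "norm (A *v v) \<le> norm v" by (rule power2_le_imp_le) simp
  qed
qed

lemma contractive_col1: "contractive a b c d \<Longrightarrow> (cmod a)^2 + (cmod c)^2 \<le> 1"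
  unfolding contractive_def by (erule allE[of _ 1], erule allE[of _ 0]) simp

lemma contractive_col2: "contractive a b c d \<Longrightarrow> (cmod b)^2 + (cmod d)^2 \<le> 1"
  unfolding contractive_def by (erule allE[of _ 0], erule allE[of _ 1]) simp

text \<open>The second row has length at most one: test with its conjugate N = |c|^2 + |d|^2,
  which yields N^2 \<le> N.\<close>
lemma contractive_row2: assumes "contractive a b c d" shows "(cmod c)^2 + (cmod d)^2 \<le> 1"
proof -
  let ?N = "(cmod c)^2 + (cmod d)^2"
  have test: "(cmod (a*cnj c+b*cnj d))\<^sup>2 + (cmod (c*cnj c+d*cnj d))\<^sup>2
              \<le> (cmod (cnj c))\<^sup>2 + (cmod (cnj d))\<^sup>2"
    using assms unfolding contractive_def by blast
  have "c*cnj c+d*cnj d = complex_of_real ?N" by (simp add: of_real_cmod_sq)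
  hence "cmod (c*cnj c+d*cnj d) = ?N" by (metis norm_of_real abs_of_nonneg add_nonneg_nonneg zero_le_power2)
  with test have "(cmod (a*cnj c+b*cnj d))^2 + ?N^2 \<le> ?N" by simp
  hence "?N^2 \<le> ?N" using zero_le_power2[of "cmod (a*cnj c+b*cnj d)"] by linarith
  thus ?thesis by (cases "?N \<le> 0") (auto simp: power2_eq_square)
qed

text \<open>The determinant of a contraction has modulus at most one (Cauchy-Schwarz applied to
  the two columns).\<close>
lemma contractive_det: assumes "contractive a b c d" shows "cmod (a*d - b*c) \<le> 1"
proof -
  have "(cmod (a*d + c*(-b)))^2 \<le> ((cmod a)^2 + (cmod c)^2) * ((cmod d)^2 + (cmod (-b))^2)"
    by (rule cauchy_schwarz_2)
  also have "\<dots> \<le> 1 * 1" using contractive_col1[OF assms] contractive_col2[OF assms]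
    by (intro mult_mono) (simp_all add: add.commute)
  finally show ?thesis by (simp add: norm_le_one_iff_sq algebra_simps)
qed

lemma contractive_pentablock_ineq:
  assumes "contractive a b c d" shows "(cmod c)^2 + (cmod (a+d))^2/4 \<le> 1"
proof -
  have "(cmod (a+d))^2 \<le> (cmod a + cmod d)^2"
    by (rule power_mono) (simp_all add: norm_triangle_ineq)
  also have "\<dots> \<le> 2*((cmod a)^2 + (cmod d)^2)"
    by (simp add: power2_sum) (smt (verit) sum_squares_bound)
  finally show ?thesis using contractive_col1[OF assms] contractive_row2[OF assms] by simp
qed

lemma piP_entries: "piP A = (A$2$1, A$1$1 + A$2$2, A$1$1*A$2$2 - A$1$2*A$2$1)"
  by (simp add: piP_def det_2)

lemma contraction_image_bounds:
  assumes "A \<in> contractions" "piP A = (a,s,p)"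
  shows "(cmod a)^2 + (cmod s)^2/4 \<le> 1" "cmod p \<le> 1" "cmod s \<le> 2"
proof -
  have c: "contractive (A$1$1) (A$1$2) (A$2$1) (A$2$2)" using assms(1) contractions_iff by blast
  show ineq: "(cmod a)^2 + (cmod s)^2/4 \<le> 1"
    using contractive_pentablock_ineq[OF c] assms(2) by (simp add: piP_entries)
  show "cmod p \<le> 1" using contractive_det[OF c] assms(2) unfolding piP_entries by auto
  have "(cmod s)^2 \<le> 4" using ineq zero_le_power2[of "cmod a"] by linarith
  thus "cmod s \<le> 2" using power2_le_imp_le[of "cmod s" 2] by simp
qed

lemma mat_ball_subset_contractions: "mat_ball \<subseteq> contractions"
proof
  fix A assume "A \<in> mat_ball"
  hence o: "onorm (\<lambda>x. A *v x) < 1" by (simp add: mat_ball_def)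
  show "A \<in> contractions" unfolding contractions_def
  proof safe
    fix x :: "complex^2"
    have "norm (A *v x) \<le> onorm (\<lambda>x. A *v x) * norm x"
      by (rule onorm) simp
    also have "\<dots> \<le> 1 * norm x" by (rule mult_right_mono) (use o in auto)
    finally show "norm (A *v x) \<le> norm x" by simp
  qed
qed

lemma contraction_entry_le:
  fixes A :: "complex^2^2" assumes "A \<in> contractions" shows "cmod (A$i$j) \<le> 1"
proof -
  have c: "contractive (A$1$1) (A$1$2) (A$2$1) (A$2$2)" using assms by (simp add: contractions_iff)
  have "(cmod (A$i$j))^2 \<le> 1"
    using contractive_col1[OF c] contractive_col2[OF c] exhaust_2[of i] exhaust_2[of j]
    by (smt (verit) zero_le_power2)
  thus ?thesis by (simp add: norm_le_one_iff_sq)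
qed

lemma compact_contractions: "compact contractions"
proof -
  have "contractions = (\<Inter>x. {A. norm (A *v x) - norm x \<le> 0})" by (auto simp: contractions_def)
  moreover have "closed {A::complex^2^2. norm (A *v x) - norm x \<le> 0}" for x
    by (rule closed_Collect_le) (simp_all add: matrix_vector_mult_def continuous_intros)
  ultimately have "closed contractions" by (metis (mono_tags, lifting) closed_INT)
  moreover have "norm A \<le> 2" if "A \<in> contractions" for A
  proof -
    have row: "(norm (A$i))^2 \<le> 2" for i
    proof -
      have "(cmod (A$i$1))^2 \<le> 1" "(cmod (A$i$2))^2 \<le> 1"
        using contraction_entry_le[OF that] norm_le_one_iff_sq by blast+
      thus ?thesis by (simp add: norm_vec2_sq)
    qed
    have "(norm A)^2 \<le> 2^2" using row[of 1] row[of 2] by (simp add: norm_vec2_sq)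
    thus ?thesis by (rule power2_le_imp_le) simp
  qed
  hence "bounded contractions" unfolding bounded_iff by blast
  ultimately show ?thesis by (simp add: compact_eq_bounded_closed)
qed

definition scale_mat :: "real \<Rightarrow> complex^2^2 \<Rightarrow> complex^2^2" where
  "scale_mat r A = (\<chi> i j. complex_of_real r * A$i$j)"

definition radial_scale :: "real \<Rightarrow> c3 \<Rightarrow> c3" where
  "radial_scale r x = (complex_of_real r * fst x, complex_of_real r * fst (snd x),
                       complex_of_real (r^2) * snd (snd x))"

lemma piP_scale_mat: "piP (scale_mat r A) = radial_scale r (piP A)"
  by (simp add: piP_entries scale_mat_def radial_scale_def algebra_simps power2_eq_square)

lemma scale_mat_in_mat_ball:
  assumes "A \<in> contractions" "0 \<le> r" "r < 1" shows "scale_mat r A \<in> mat_ball"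
proof -
  have "onorm (\<lambda>x. scale_mat r A *v x) \<le> r"
  proof (rule onorm_le)
    fix x :: "complex^2"
    have "scale_mat r A *v x = scaleR r (A *v x)"
      unfolding vec_eq_iff vector_scaleR_component
      by (simp add: scale_mat_def matrix_vector_mult_def sum_distrib_left mult.assoc scaleR_conv_of_real)
    hence "norm (scale_mat r A *v x) = r * norm (A *v x)" using assms(2) by simp
    also have "\<dots> \<le> r * norm x" using assms(1,2) by (simp add: contractions_def mult_left_mono)
    finally show "norm (scale_mat r A *v x) \<le> r * norm x" .
  qed
  thus ?thesis using assms(3) by (simp add: mat_ball_def)
qed

lemma radial_scale_contraction_image:
  assumes "A \<in> contractions" "0 \<le> r" "r < 1" shows "radial_scale r (piP A) \<in> Pent"
  using scale_mat_in_mat_ball[OF assms] unfolding Pent_def piP_scale_mat[symmetric] by blast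

lemma compact_contraction_image: "compact (piP ` contractions)"
  by (rule compact_continuous_image[OF _ compact_contractions])
     (simp add: piP_entries continuous_intros)

text \<open>The closure of the pentablock is the image of the closed unit ball: the image is
  compact, and each of its points is the limit of its radial scalings, which lie in P.\<close>
lemma closure_Pent_eq: "closure Pent = piP ` contractions"
proof
  from compact_contraction_image have "closed (piP ` contractions)" by (rule compact_imp_closed)
  moreover have "Pent \<subseteq> piP ` contractions"
    using mat_ball_subset_contractions by (auto simp: Pent_def)
  ultimately show "closure Pent \<subseteq> piP ` contractions" by (rule closure_minimal[rotated])
next
  show "piP ` contractions \<subseteq> closure Pent"
  proof
    fix x assume "x \<in> piP ` contractions"
    then obtain A where A: "A \<in> contractions" "x = piP A" by auto
    define r where "r n = 1 - inverse (real (Suc n))" for n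
    have r0: "0 \<le> r n" "r n < 1" for n by (auto simp: r_def field_simps)
    have "r \<longlonglongrightarrow> 1"
      unfolding r_def using tendsto_diff[OF tendsto_const LIMSEQ_inverse_real_of_nat] by simp
    hence "(\<lambda>n. radial_scale (r n) x) \<longlonglongrightarrow> radial_scale 1 x"
      unfolding radial_scale_def by (intro tendsto_intros)
    moreover have "radial_scale 1 x = x" by (simp add: radial_scale_def)
    moreover have "radial_scale (r n) x \<in> Pent" for n
      using radial_scale_contraction_image[OF A(1) r0] A(2) by simp
    ultimately show "x \<in> closure Pent" unfolding closure_sequential by metis
  qed
qed

lemma compact_closure_Pent: "compact (closure Pent)"
  by (simp add: closure_Pent_eq compact_contraction_image)

lemma closure_Pent_bounds: assumes "(a,s,p) \<in> closure Pent"
  shows "(cmod a)^2 + (cmod s)^2/4 \<le> 1" "cmod p \<le> 1" "cmod s \<le> 2" "cmod a \<le> 1"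
proof -
  obtain A where "A \<in> contractions" "piP A = (a,s,p)" using assms unfolding closure_Pent_eq by auto
  note b = contraction_image_bounds[OF this]
  show "(cmod a)^2 + (cmod s)^2/4 \<le> 1" "cmod p \<le> 1" "cmod s \<le> 2" by (fact b)+
  have "(cmod a)^2 \<le> 1" using b(1) zero_le_power2[of "cmod s"] by linarith
  thus "cmod a \<le> 1" by (simp add: norm_le_one_iff_sq)
qed

lemma radial_scale_in_Pent:
  assumes "x \<in> closure Pent" "0 \<le> r" "r < 1" shows "radial_scale r x \<in> Pent"
  using assms radial_scale_contraction_image unfolding closure_Pent_eq by blast

lemma dist_radial_scale_le:
  assumes "y \<in> closure Pent" "0 \<le> r" "r \<le> 1"
  shows "dist (radial_scale r y) y \<le> 5 * (1 - r)"
proof -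
  obtain a s p where y: "y = (a,s,p)" by (cases y) auto
  have b: "cmod a \<le> 1" "cmod s \<le> 2" "cmod p \<le> 1" using closure_Pent_bounds assms(1) y by auto
  have e: "radial_scale r y - y = (of_real (r-1) * a, of_real (r-1) * s, of_real (r^2-1) * p)"
    by (simp add: y radial_scale_def algebra_simps)
  have "dist (radial_scale r y) y
        \<le> cmod (of_real (r-1) * a) + (cmod (of_real (r-1) * s) + cmod (of_real (r^2-1) * p))"
    unfolding dist_norm e by (meson add_left_mono norm_Pair_le order_trans)
  also have "\<dots> = \<bar>r-1\<bar> * cmod a + (\<bar>r-1\<bar> * cmod s + \<bar>r^2-1\<bar> * cmod p)"
    by (simp only: norm_mult norm_of_real)
  also have "\<dots> = (1-r) * cmod a + ((1-r) * cmod s + (1-r^2) * cmod p)"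
    using assms(2,3) power_le_one[of r 2] by (auto simp: abs_if)
  also have "\<dots> \<le> (1-r) * 1 + ((1-r) * 2 + (1-r^2) * 1)"
    using assms(2,3) b by (intro add_mono mult_left_mono) (auto simp: power_le_one)
  also have "1 - r^2 = (1-r)*(1+r)" by (simp add: power2_eq_square algebra_simps)
  also have "(1-r)*(1+r) \<le> (1-r)*2" using assms(2,3) by (intro mult_left_mono) auto
  finally show ?thesis by simp
qed

section \<open>A maximum principle on analytic discs in the closure of P\<close>

definition analytic_disc :: "(complex \<Rightarrow> c3) \<Rightarrow> bool" where
  "analytic_disc \<phi> \<longleftrightarrow> continuous_on (cball 0 1) \<phi> \<and>
     (\<lambda>z. fst (\<phi> z)) holomorphic_on ball 0 1 \<and>
     (\<lambda>z. fst (snd (\<phi> z))) holomorphic_on ball 0 1 \<and>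
     (\<lambda>z. snd (snd (\<phi> z))) holomorphic_on ball 0 1"

text \<open>All discs used below have entire coordinates.\<close>
lemma analytic_discI:
  assumes "p1 holomorphic_on UNIV" "p2 holomorphic_on UNIV" "p3 holomorphic_on UNIV"
  shows "analytic_disc (\<lambda>z. (p1 z, p2 z, p3 z))"
proof -
  have "continuous_on (cball 0 1) p" if "p holomorphic_on UNIV" for p
    using holomorphic_on_imp_continuous_on[OF that] continuous_on_subset by blast
  moreover have "p holomorphic_on ball 0 1" if "p holomorphic_on UNIV" for p
    using that holomorphic_on_subset by blast
  ultimately show ?thesis using assms unfolding analytic_disc_def
    by (simp add: continuous_on_Pair)
qed

text \<open>A function of A(P) composed with a radially shrunk analytic disc of the closure is
  holomorphic: the disc now runs inside P, where f is complex differentiable.\<close>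
lemma holomorphic_on_shrunk_disc:
  assumes f: "f \<in> AP" and \<phi>: "analytic_disc \<phi>" and img: "\<phi> ` cball 0 1 \<subseteq> closure Pent"
    and r: "0 \<le> r" "r < 1"
  shows "(\<lambda>z. f (radial_scale r (\<phi> z))) holomorphic_on ball 0 1"
  unfolding holomorphic_on_def
proof
  fix z :: complex assume z: "z \<in> ball 0 1"
  define p1 p2 p3 where "p1 w = fst (\<phi> w)" and "p2 w = fst (snd (\<phi> w))"
    and "p3 w = snd (snd (\<phi> w))" for w
  obtain d1 d2 d3 where d: "(p1 has_field_derivative d1) (at z)"
      "(p2 has_field_derivative d2) (at z)" "(p3 has_field_derivative d3) (at z)"
    using \<phi> z unfolding analytic_disc_def p1_def p2_def p3_def
    by (meson holomorphic_on_open open_ball)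
  have "\<phi> z \<in> closure Pent" using img z by auto
  hence in_P: "radial_scale r (\<phi> z) \<in> Pent" using radial_scale_in_Pent[OF _ r] by blast
  then obtain L where L: "(f has_derivative L) (at (radial_scale r (\<phi> z)))"
      "\<And>c v. L (c3_scale c v) = c * L v"
    using f unfolding AP_def holo3_on_def by blast
  define v where "v = (of_real r * d1, of_real r * d2, of_real (r^2) * d3)"
  have scale_eq: "radial_scale r (\<phi> w) = (of_real r * p1 w, of_real r * p2 w, of_real (r^2) * p3 w)" for w
    by (simp add: radial_scale_def p1_def p2_def p3_def)
  have "((\<lambda>w. radial_scale r (\<phi> w)) has_derivative
          (\<lambda>h. (of_real r * d1 * h, of_real r * d2 * h, of_real (r^2) * d3 * h))) (at z)"
    unfolding scale_eq
    by (intro has_derivative_Pair; rule has_field_derivative_imp_has_derivative[unfolded has_field_derivative_def])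
       (auto intro!: derivative_eq_intros d[unfolded has_field_derivative_def])
  moreover have "(\<lambda>h. (of_real r * d1 * h, of_real r * d2 * h, of_real (r^2) * d3 * h)) = (\<lambda>h. c3_scale h v)"
    by (auto simp: c3_scale_def v_def)
  ultimately have "((f \<circ> (\<lambda>w. radial_scale r (\<phi> w))) has_derivative (L \<circ> (\<lambda>h. c3_scale h v))) (at z)"
    using L(1) by (intro diff_chain_at) simp_all
  moreover have "L \<circ> (\<lambda>h. c3_scale h v) = (*) (L v)"
    by (auto simp: L(2) mult.commute)
  ultimately have "((\<lambda>w. f (radial_scale r (\<phi> w))) has_field_derivative (L v)) (at z)"
    by (simp add: has_field_derivative_def comp_def)
  thus "(\<lambda>w. f (radial_scale r (\<phi> w))) field_differentiable (at z within ball 0 1)"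
    by (auto simp: field_differentiable_def intro: has_field_derivative_at_within)
qed

text \<open>Uniform continuity of f on the compact closure: a radial scaling close enough to the
  identity changes the values of f by less than any given e.\<close>
lemma AP_radial_approx:
  assumes f: "f \<in> AP" and e: "e > 0"
  obtains r where "0 \<le> r" "r < 1" "\<And>y. y \<in> closure Pent \<Longrightarrow> dist (f (radial_scale r y)) (f y) < e"
proof -
  have "uniformly_continuous_on (closure Pent) f"
    by (rule compact_uniformly_continuous[OF _ compact_closure_Pent]) (use f in \<open>simp add: AP_def\<close>)
  then obtain d where d: "d > 0"
    "\<And>x y. x \<in> closure Pent \<Longrightarrow> y \<in> closure Pent \<Longrightarrow> dist y x < d \<Longrightarrow> dist (f y) (f x) < e"
    using e unfolding uniformly_continuous_on_def by metis
  define r where "r = max 0 (1 - d/10)"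
  have r: "0 \<le> r" "r < 1" "5*(1-r) < d" using d(1) by (auto simp: r_def max_def)
  show ?thesis
  proof (rule that[OF r(1,2)])
    fix y assume y: "y \<in> closure Pent"
    have "radial_scale r y \<in> closure Pent" using radial_scale_in_Pent[OF y r(1,2)] closure_subset by blast
    moreover have "dist (radial_scale r y) y < d" using dist_radial_scale_le[OF y r(1)] r by linarith
    ultimately show "dist (f (radial_scale r y)) (f y) < e" using d(2)[OF y] by blast
  qed
qed

text \<open>The shrunk discs are holomorphic, so the one-variable
  maximum modulus theorem applies to them; then let the scaling tend to the identity.\<close>
lemma disc_maximum_principle:
  assumes f: "f \<in> AP" and \<phi>: "analytic_disc \<phi>" and img: "\<phi> ` cball 0 1 \<subseteq> closure Pent"
    and B: "\<And>z. z \<in> sphere 0 1 \<Longrightarrow> cmod (f (\<phi> z)) \<le> B"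
    and z0: "z0 \<in> cball 0 1"
  shows "cmod (f (\<phi> z0)) \<le> B"
proof (rule field_le_epsilon)
  fix e :: real assume e: "e > 0"
  then obtain r where r: "0 \<le> r" "r < 1"
    and close: "\<And>y. y \<in> closure Pent \<Longrightarrow> dist (f (radial_scale r y)) (f y) < e/2"
    using AP_radial_approx[OF f, of "e/2"] by auto
  define g where "g z = f (radial_scale r (\<phi> z))" for z
  have f_cont: "continuous_on (closure Pent) f" using f by (simp add: AP_def)
  have scaled_cont: "continuous_on (cball 0 1) (\<lambda>z. radial_scale r (\<phi> z))"
    using \<phi>[unfolded analytic_disc_def, THEN conjunct1] unfolding radial_scale_def
    by (intro continuous_intros)
  have scaled_img: "(\<lambda>z. radial_scale r (\<phi> z)) ` cball 0 1 \<subseteq> closure Pent"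
    using radial_scale_in_Pent[OF _ r] img closure_subset by blast
  have "continuous_on (cball 0 1) g"
    unfolding g_def by (rule continuous_on_compose2[OF f_cont scaled_cont scaled_img])
  moreover have "g holomorphic_on ball 0 1"
    unfolding g_def by (rule holomorphic_on_shrunk_disc[OF f \<phi> img r])
  moreover have "cmod (g z) \<le> B + e/2" if "z \<in> sphere 0 1" for z
    using close[of "\<phi> z"] B[OF that] img that unfolding g_def dist_norm
    by (smt (verit, best) image_subset_iff mem_cball_0 mem_sphere_0 norm_triangle_ineq2)
  ultimately have "cmod (g z0) \<le> B + e/2"
    using maximum_modulus_frontier[of g "cball 0 1" "B + e/2" z0] z0 by simp
  moreover have "cmod (f (\<phi> z0)) \<le> cmod (g z0) + e/2"
    using close[of "\<phi> z0"] img z0 unfolding g_def dist_norm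
    by (smt (verit, best) image_subset_iff norm_minus_commute norm_triangle_ineq2)
  ultimately show "cmod (f (\<phi> z0)) \<le> B + e" by simp
qed

section \<open>Singular value decomposition of 2x2 contractions\<close>

definition mat2 :: "complex \<Rightarrow> complex \<Rightarrow> complex \<Rightarrow> complex \<Rightarrow> complex^2^2" where
  "mat2 a b c d = (\<chi> i j. if i = 1 then (if j = 1 then a else b) else (if j = 1 then c else d))"

lemma mat2_simps [simp]: "mat2 a b c d $ 1 $ 1 = a" "mat2 a b c d $ 1 $ 2 = b"
  "mat2 a b c d $ 2 $ 1 = c" "mat2 a b c d $ 2 $ 2 = d"
  by (simp_all add: mat2_def)

lemma mat2_eq_iff: "mat2 a b c d = mat2 a' b' c' d' \<longleftrightarrow> a = a' \<and> b = b' \<and> c = c' \<and> d = d'"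
  by (metis mat2_simps)

lemma mat2_eta: "(A::complex^2^2) = mat2 (A$1$1) (A$1$2) (A$2$1) (A$2$2)"
  unfolding vec_eq_iff forall_2 by simp

text \<open>The matrix Y diag(z1,z2) X^*, where X has the orthonormal columns (x1,x2) and
  (-cnj x2, cnj x1), and Y likewise for (y1,y2).\<close>
definition svd_matrix :: "complex \<Rightarrow> complex \<Rightarrow> complex \<Rightarrow> complex \<Rightarrow> complex \<Rightarrow> complex \<Rightarrow> complex^2^2" where
  "svd_matrix x1 x2 y1 y2 z1 z2 =
     mat2 (z1*y1*cnj x1 + z2*cnj y2*x2) (z1*y1*cnj x2 - z2*cnj y2*x1)
          (z1*y2*cnj x1 - z2*cnj y1*x2) (z1*y2*cnj x2 + z2*cnj y1*x1)"

text \<open>The unitary matrices Y and X^* preserve Euclidean length.\<close>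
lemma unitary_columns_norm:
  "(cmod (u * y1 - v * cnj y2))^2 + (cmod (u * y2 + v * cnj y1))^2
   = ((cmod u)^2+(cmod v)^2)*((cmod y1)^2+(cmod y2)^2)"
  by (rule of_real_eq_iff[where 'a=complex, THEN iffD1],
      unfold of_real_mult of_real_add of_real_power of_real_cmod_sq) (simp add: algebra_simps)

lemma unitary_rows_norm:
  "(cmod (cnj x1*w1 + cnj x2*w2))^2 + (cmod (x1*w2 - x2*w1))^2
   = ((cmod x1)^2+(cmod x2)^2)*((cmod w1)^2+(cmod w2)^2)"
  by (rule of_real_eq_iff[where 'a=complex, THEN iffD1],
      unfold of_real_mult of_real_add of_real_power of_real_cmod_sq) (simp add: algebra_simps)

lemma svd_matrix_contraction:
  assumes x: "unit_pair x1 x2" and y: "unit_pair y1 y2" and z: "cmod z1 \<le> 1" "cmod z2 \<le> 1"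
  shows "svd_matrix x1 x2 y1 y2 z1 z2 \<in> contractions"
  unfolding contractions_iff svd_matrix_def mat2_simps contractive_def
proof (intro allI)
  fix w1 w2
  define c1 where "c1 = cnj x1*w1 + cnj x2*w2"
  define c2 where "c2 = x1*w2 - x2*w1"
  have e1: "(z1*y1*cnj x1 + z2*cnj y2*x2) * w1 + (z1*y1*cnj x2 - z2*cnj y2*x1) * w2
            = (z1*c1)*y1 - (z2*c2)*cnj y2"
    by (simp add: c1_def c2_def algebra_simps)
  have e2: "(z1*y2*cnj x1 - z2*cnj y1*x2) * w1 + (z1*y2*cnj x2 + z2*cnj y1*x1) * w2
            = (z1*c1)*y2 + (z2*c2)*cnj y1"
    by (simp add: c1_def c2_def algebra_simps)
  have "(cmod ((z1*c1)*y1 - (z2*c2)*cnj y2))^2 + (cmod ((z1*c1)*y2 + (z2*c2)*cnj y1))^2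
        = (cmod z1)^2 * (cmod c1)^2 + (cmod z2)^2 * (cmod c2)^2"
    using unitary_columns_norm[of "z1*c1" y1 "z2*c2" y2] y[unfolded unit_pair_def]
    by (simp only: mult_1_right norm_mult power_mult_distrib)
  also have "\<dots> \<le> 1 * (cmod c1)^2 + 1 * (cmod c2)^2"
    using z by (intro add_mono mult_right_mono) (auto simp: power_le_one)
  also have "\<dots> = (cmod w1)^2 + (cmod w2)^2"
    using unitary_rows_norm[of x1 w1 x2 w2] x by (simp add: unit_pair_def c1_def c2_def)
  finally show "(cmod ((z1*y1*cnj x1 + z2*cnj y2*x2) * w1 + (z1*y1*cnj x2 - z2*cnj y2*x1) * w2))\<^sup>2 +
       (cmod ((z1*y2*cnj x1 - z2*cnj y1*x2) * w1 + (z1*y2*cnj x2 + z2*cnj y1*x1) * w2))\<^sup>2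
       \<le> (cmod w1)\<^sup>2 + (cmod w2)\<^sup>2" unfolding e1 e2 .
qed

lemma piP_svd_matrix:
  assumes "unit_pair x1 x2" "unit_pair y1 y2"
  shows "piP (svd_matrix x1 x2 y1 y2 z1 z2) =
     (z1*y2*cnj x1 - z2*cnj y1*x2, z1 * (y1*cnj x1 + y2*cnj x2) + z2 * cnj (y1*cnj x1 + y2*cnj x2),
      z1*z2)"
proof -
  have "piP (svd_matrix x1 x2 y1 y2 z1 z2) =
     (z1*y2*cnj x1 - z2*cnj y1*x2, z1 * (y1*cnj x1 + y2*cnj x2) + z2 * cnj (y1*cnj x1 + y2*cnj x2),
      z1*z2*(y1*cnj y1 + y2*cnj y2)*(x1*cnj x1 + x2*cnj x2))"
    unfolding svd_matrix_def piP_entries mat2_simps by (simp add: algebra_simps)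
  thus ?thesis using assms by (simp add: unit_pair_mult_cnj)
qed

text \<open>A maps the orthonormal frame x, x\<bottom> to s1 y, s2 y\<bottom>, where x\<bottom> = (-cnj x2, cnj x1).\<close>
definition singular_frame ::
    "complex \<Rightarrow> complex \<Rightarrow> complex \<Rightarrow> complex \<Rightarrow> complex \<Rightarrow> complex \<Rightarrow> complex \<Rightarrow> complex \<Rightarrow>
     complex \<Rightarrow> complex \<Rightarrow> bool" where
  "singular_frame a b c d x1 x2 y1 y2 s1 s2 \<longleftrightarrow>
     a*x1+b*x2 = s1*y1 \<and> c*x1+d*x2 = s1*y2 \<and>
     -a*cnj x2 + b*cnj x1 = -s2*cnj y2 \<and> -c*cnj x2 + d*cnj x1 = s2*cnj y1"

lemma svd_matrix_of_frame:
  assumes x: "unit_pair x1 x2" and frame: "singular_frame a b c d x1 x2 y1 y2 s1 s2"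
  shows "mat2 a b c d = svd_matrix x1 x2 y1 y2 s1 s2"
proof -
  have X: "x1*cnj x1 + x2*cnj x2 = 1" by (rule unit_pair_mult_cnj[OF x])
  have u1: "a*x1+b*x2 = s1*y1" and u2: "c*x1+d*x2 = s1*y2"
    and v1: "-a*cnj x2 + b*cnj x1 = -s2*cnj y2" and v2: "-c*cnj x2 + d*cnj x1 = s2*cnj y1"
    using frame by (simp_all add: singular_frame_def)
  have "s1*y1*cnj x1 + s2*cnj y2*x2 = (a*x1+b*x2)*cnj x1 - (-a*cnj x2 + b*cnj x1)*x2"
    unfolding u1 v1 by (simp add: algebra_simps)
  also have "\<dots> = a*(x1*cnj x1 + x2*cnj x2)" by (simp add: algebra_simps)
  finally have 1: "s1*y1*cnj x1 + s2*cnj y2*x2 = a" using X by simp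
  have "s1*y1*cnj x2 - s2*cnj y2*x1 = (a*x1+b*x2)*cnj x2 + (-a*cnj x2 + b*cnj x1)*x1"
    unfolding u1 v1 by (simp add: algebra_simps)
  also have "\<dots> = b*(x1*cnj x1 + x2*cnj x2)" by (simp add: algebra_simps)
  finally have 2: "s1*y1*cnj x2 - s2*cnj y2*x1 = b" using X by simp
  have "s1*y2*cnj x1 - s2*cnj y1*x2 = (c*x1+d*x2)*cnj x1 - (-c*cnj x2 + d*cnj x1)*x2"
    unfolding u2 v2 by (simp add: algebra_simps)
  also have "\<dots> = c*(x1*cnj x1 + x2*cnj x2)" by (simp add: algebra_simps)
  finally have 3: "s1*y2*cnj x1 - s2*cnj y1*x2 = c" using X by simp
  have "s1*y2*cnj x2 + s2*cnj y1*x1 = (c*x1+d*x2)*cnj x2 + (-c*cnj x2 + d*cnj x1)*x1"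
    unfolding u2 v2 by (simp add: algebra_simps)
  also have "\<dots> = d*(x1*cnj x1 + x2*cnj x2)" by (simp add: algebra_simps)
  finally have 4: "s1*y2*cnj x2 + s2*cnj y1*x1 = d" using X by simp
  show ?thesis unfolding svd_matrix_def mat2_eq_iff using 1 2 3 4 by simp
qed

lemma singular_frame_bounds:
  assumes c: "contractive a b c d" and x: "unit_pair x1 x2" and y: "unit_pair y1 y2"
    and frame: "singular_frame a b c d x1 x2 y1 y2 s1 s2"
  shows "cmod s1 \<le> 1" "cmod s2 \<le> 1"
proof -
  have u: "a*x1+b*x2 = s1*y1" "c*x1+d*x2 = s1*y2"
    and v: "a*(-cnj x2)+b*cnj x1 = -s2*cnj y2" "c*(-cnj x2)+d*cnj x1 = s2*cnj y1"
    using frame by (simp_all add: singular_frame_def)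
  have "(cmod (a*x1+b*x2))^2 + (cmod (c*x1+d*x2))^2 \<le> (cmod x1)^2 + (cmod x2)^2"
    using c unfolding contractive_def by blast
  hence "(cmod s1)^2 * ((cmod y1)^2 + (cmod y2)^2) \<le> 1" unfolding u using x[unfolded unit_pair_def]
    by (simp only: norm_mult power_mult_distrib distrib_left)
  thus "cmod s1 \<le> 1" using y by (simp add: unit_pair_def norm_le_one_iff_sq)
  have "(cmod (a*(-cnj x2)+b*cnj x1))^2 + (cmod (c*(-cnj x2)+d*cnj x1))^2
        \<le> (cmod (-cnj x2))^2 + (cmod (cnj x1))^2"
    using c unfolding contractive_def by blast
  moreover have "(cmod x2)^2 + (cmod x1)^2 = 1" using x by (simp add: unit_pair_def add.commute)
  ultimately have "(cmod s2)^2 * ((cmod y2)^2 + (cmod y1)^2) \<le> 1" unfolding v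
    by (simp only: norm_mult norm_minus_cancel complex_mod_cnj power_mult_distrib distrib_left)
  thus "cmod s2 \<le> 1" using y by (simp add: unit_pair_def norm_le_one_iff_sq add.commute)
qed

lemma complex_quadratic_root: "(\<alpha>::complex) \<noteq> 0 \<Longrightarrow> \<exists>t. \<alpha>*t^2 + \<beta>*t + \<gamma> = 0"
proof -
  assume a: "\<alpha> \<noteq> 0"
  define r where "r = csqrt (\<beta>^2 - 4*\<alpha>*\<gamma>)"
  define t where "t = (-\<beta> + r) / (2*\<alpha>)"
  have "4*\<alpha> * (\<alpha>*t^2 + \<beta>*t + \<gamma>) = (2*\<alpha>*t + \<beta>)^2 - (\<beta>^2 - 4*\<alpha>*\<gamma>)"
    by (simp add: power2_eq_square algebra_simps)
  also have "2*\<alpha>*t + \<beta> = r" using a by (simp add: t_def field_simps)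
  finally show ?thesis using a by (auto simp: r_def)
qed

lemma unit_zero_of_binary_form:
  "\<exists>x1 x2. unit_pair x1 x2 \<and> cnj h * x1^2 + k * x1 * x2 - h * x2^2 = 0"
proof (cases "h = 0")
  case True thus ?thesis by (intro exI[of _ 1] exI[of _ 0]) (simp add: unit_pair_def)
next
  case False
  then obtain t where t: "cnj h * t^2 + k * t + (- h) = 0"
    using complex_quadratic_root[of "cnj h" k "-h"] by auto
  define n where "n = sqrt ((cmod t)^2 + 1)"
  have n: "n > 0" unfolding n_def by (intro real_sqrt_gt_zero add_nonneg_pos) auto
  have "(cmod (t / of_real n))^2 + (cmod (1 / of_real n))^2 = ((cmod t)^2 + 1) / n^2"
    using n by (simp add: norm_divide power_divide add_divide_distrib)
  also have "\<dots> = 1" using n by (simp add: n_def)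
  finally have unit: "unit_pair (t / of_real n) (1 / of_real n)" by (simp add: unit_pair_def)
  have "cnj h * (t / of_real n)^2 + k * (t / of_real n) * (1 / of_real n) - h * (1 / of_real n)^2
        = (cnj h * t^2 + k * t + (- h)) / (of_real n)^2"
    using n by (simp add: field_simps power2_eq_square)
  also have "\<dots> = 0" using t by simp
  finally show ?thesis using unit by blast
qed

text \<open>The images A x and A x\<bottom> are orthogonal exactly when x is a zero of a binary
  form built from the columns of A; so some unit vector x has orthogonal images.\<close>
lemma orthogonal_images_exist:
  "\<exists>x1 x2. unit_pair x1 x2 \<and>
     (a*x1+b*x2) * cnj (-a*cnj x2 + b*cnj x1) + (c*x1+d*x2) * cnj (-c*cnj x2 + d*cnj x1) = 0"
proof -
  have form: "(a*x1+b*x2) * cnj (-a*cnj x2 + b*cnj x1) + (c*x1+d*x2) * cnj (-c*cnj x2 + d*cnj x1)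
    = cnj (cnj a * b + cnj c * d) * x1^2 + (b*cnj b + d*cnj d - a*cnj a - c*cnj c) * x1 * x2
      - (cnj a * b + cnj c * d) * x2^2" for x1 x2
    by (simp add: algebra_simps power2_eq_square)
  show ?thesis unfolding form by (rule unit_zero_of_binary_form)
qed

text \<open>If x has orthogonal and nonzero images, normalising A x gives y, and orthogonality
  forces A x\<bottom> to be a multiple of y\<bottom>.\<close>
lemma singular_frame_of_orthogonal:
  assumes x: "unit_pair x1 x2"
   and orth: "(a*x1+b*x2) * cnj (-a*cnj x2 + b*cnj x1) + (c*x1+d*x2) * cnj(-c*cnj x2 + d*cnj x1) = 0"
   and nz: "(cmod (a*x1+b*x2))^2 + (cmod (c*x1+d*x2))^2 > 0"
  shows "\<exists>y1 y2 s1 s2. unit_pair y1 y2 \<and> singular_frame a b c d x1 x2 y1 y2 s1 s2"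
proof -
  define u1 u2 v1 v2 where "u1 = a*x1+b*x2" and "u2 = c*x1+d*x2"
    and "v1 = -a*cnj x2 + b*cnj x1" and "v2 = -c*cnj x2 + d*cnj x1"
  define n where "n = sqrt ((cmod u1)^2 + (cmod u2)^2)"
  have n: "n > 0" "n^2 = (cmod u1)^2 + (cmod u2)^2" using nz by (auto simp: n_def u1_def u2_def)
  have nc: "complex_of_real n \<noteq> 0" using n by simp
  have u_norm_sq: "u1 * cnj u1 + u2 * cnj u2 = (complex_of_real n)^2"
    using n(2) by (metis of_real_cmod_sq of_real_add of_real_power)
  define y1 y2 where "y1 = u1 / of_real n" and "y2 = u2 / of_real n"
  define s2 where "s2 = -v1*y2 + v2*y1"
  have orth_conj: "cnj u1 * v1 + cnj u2 * v2 = 0"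
  proof -
    have "cnj (u1 * cnj v1 + u2 * cnj v2) = 0" using orth by (simp add: u1_def u2_def v1_def v2_def)
    thus ?thesis by (simp add: mult.commute)
  qed
  have "(cmod y1)^2+(cmod y2)^2 = ((cmod u1)^2 + (cmod u2)^2)/n^2"
    by (simp add: y1_def y2_def norm_divide power_divide add_divide_distrib)
  also have "\<dots> = 1" unfolding n(2)[symmetric] using n(1) by simp
  finally have y: "unit_pair y1 y2" by (simp add: unit_pair_def)
  have "(complex_of_real n)^2 * (-s2*cnj y2) = v1*(u2*cnj u2) - v2*u1*cnj u2"
    using nc by (simp add: s2_def y1_def y2_def field_simps power2_eq_square)
  also have "\<dots> = v1 * (u1 * cnj u1 + u2 * cnj u2) - u1 * (cnj u1 * v1 + cnj u2 * v2)"
    by (simp add: algebra_simps)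
  also have "\<dots> = (complex_of_real n)^2 * v1" using orth_conj u_norm_sq by simp
  finally have v1: "v1 = -s2*cnj y2" using nc by (metis mult_left_cancel power_not_zero)
  have "(complex_of_real n)^2 * (s2*cnj y1) = -v1*u2*cnj u1 + v2*(u1*cnj u1)"
    using nc by (simp add: s2_def y1_def y2_def field_simps power2_eq_square)
  also have "\<dots> = v2 * (u1 * cnj u1 + u2 * cnj u2) - u2 * (cnj u1 * v1 + cnj u2 * v2)"
    by (simp add: algebra_simps)
  also have "\<dots> = (complex_of_real n)^2 * v2" using orth_conj u_norm_sq by simp
  finally have v2: "v2 = s2*cnj y1" using nc by (metis mult_left_cancel power_not_zero)
  have "u1 = of_real n * y1" "u2 = of_real n * y2" using nc by (simp_all add: y1_def y2_def)
  hence "singular_frame a b c d x1 x2 y1 y2 n s2"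
    using v1 v2 by (simp add: singular_frame_def u1_def u2_def v1_def v2_def)
  thus ?thesis using y by blast
qed

text \<open>Every matrix has a singular frame: start from a unit vector with orthogonal images;
  if its image vanishes, use x\<bottom> instead, and if both images vanish, A = 0.\<close>
lemma singular_frame_exists:
  "\<exists>x1 x2 y1 y2 s1 s2. unit_pair x1 x2 \<and> unit_pair y1 y2 \<and> singular_frame a b c d x1 x2 y1 y2 s1 s2"
proof -
  obtain x1 x2 where x: "unit_pair x1 x2"
    and orth: "(a*x1+b*x2) * cnj (-a*cnj x2 + b*cnj x1) + (c*x1+d*x2) * cnj (-c*cnj x2 + d*cnj x1) = 0"
    using orthogonal_images_exist by blast
  let ?x1 = "-cnj x2" and ?x2 = "cnj x1"
  have x': "unit_pair ?x1 ?x2" using x by (simp add: unit_pair_def add.commute)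
  have swap: "-a*cnj ?x2 + b*cnj ?x1 = -(a*x1+b*x2)" "-c*cnj ?x2 + d*cnj ?x1 = -(c*x1+d*x2)"
    by simp_all
  have zero_iff: "(cmod u)^2 + (cmod v)^2 > 0 \<longleftrightarrow> \<not> (u = 0 \<and> v = 0)" for u v :: complex
    by (simp add: sum_power2_gt_zero_iff)
  consider "\<not> (a*x1+b*x2 = 0 \<and> c*x1+d*x2 = 0)"
    | "a*x1+b*x2 = 0" "c*x1+d*x2 = 0" "\<not> (a*?x1+b*?x2 = 0 \<and> c*?x1+d*?x2 = 0)"
    | "a*x1+b*x2 = 0" "c*x1+d*x2 = 0" "a*?x1+b*?x2 = 0" "c*?x1+d*?x2 = 0"
    by blast
  thus ?thesis
  proof cases
    case 1
    thus ?thesis using singular_frame_of_orthogonal[OF x orth] x zero_iff by blast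
  next
    case 2
    hence "\<exists>y1 y2 s1 s2. unit_pair y1 y2 \<and> singular_frame a b c d ?x1 ?x2 y1 y2 s1 s2"
      using zero_iff by (intro singular_frame_of_orthogonal[OF x']) (simp_all only: swap, simp_all)
    thus ?thesis using x' by blast
  next
    case 3
    hence "singular_frame a b c d x1 x2 1 0 0 0"
      by (simp add: singular_frame_def algebra_simps)
    moreover have "unit_pair 1 0" by (simp add: unit_pair_def)
    ultimately show ?thesis using x by blast
  qed
qed

lemma contraction_svd:
  assumes "A \<in> contractions"
  obtains x1 x2 y1 y2 s1 s2 where "unit_pair x1 x2" "unit_pair y1 y2" "cmod s1 \<le> 1" "cmod s2 \<le> 1"
    "A = svd_matrix x1 x2 y1 y2 s1 s2"
proof -
  have c: "contractive (A$1$1) (A$1$2) (A$2$1) (A$2$2)" using assms contractions_iff by blast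
  obtain x1 x2 y1 y2 s1 s2 where x: "unit_pair x1 x2" and y: "unit_pair y1 y2"
    and frame: "singular_frame (A$1$1) (A$1$2) (A$2$1) (A$2$2) x1 x2 y1 y2 s1 s2"
    using singular_frame_exists by blast
  show ?thesis
    using that[OF x y singular_frame_bounds[OF c x y frame]] svd_matrix_of_frame[OF x frame] mat2_eta[of A]
    by simp
qed

section \<open>The distinguished boundary of the symmetrized bidisc\<close>

lemma bGamma_necessary:
  assumes "cmod z1 = 1" "cmod z2 = 1"
  shows "cmod (z1+z2) \<le> 2" "cmod (z1*z2) = 1" "z1+z2 = cnj (z1+z2) * (z1*z2)"
proof -
  show "cmod (z1+z2) \<le> 2" using norm_triangle_ineq[of z1 z2] assms by simp
  show "cmod (z1*z2) = 1" using assms by (simp add: norm_mult)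
  have "cnj (z1+z2) * (z1*z2) = (z1 * cnj z1) * z2 + (z2 * cnj z2) * z1" by (simp add: algebra_simps)
  thus "z1+z2 = cnj (z1+z2) * (z1*z2)"
    using unimodular_mult_cnj[OF assms(1)] unimodular_mult_cnj[OF assms(2)] by simp
qed

lemma reflected_root:
  assumes p: "cmod p = 1" and e: "s = cnj s * p" and r: "z^2 - s*z + p = 0" and z: "z \<noteq> 0"
  shows "(1 / cnj z)^2 - s * (1 / cnj z) + p = 0"
proof -
  have "cnj (1 - s * cnj z + p * (cnj z)^2) * p = p - (cnj s * p) * z + (p * cnj p) * z^2"
    by (simp add: algebra_simps)
  also have "\<dots> = 0" using unimodular_mult_cnj[OF p] e r by (simp add: algebra_simps)
  finally have "cnj (1 - s * cnj z + p * (cnj z)^2) = 0" using p by (metis mult_eq_0_iff norm_zero zero_neq_one)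
  hence "1 - s * cnj z + p * (cnj z)^2 = 0" by (simp only: complex_cnj_zero_iff)
  hence "(1 - s * cnj z + p * (cnj z)^2) / (cnj z)^2 = 0" by simp
  thus ?thesis using z by (simp add: field_simps power2_eq_square)
qed

text \<open>A number and its reflection in the unit circle sum to modulus r + 1/r > 2.\<close>
lemma norm_add_reflection:
  assumes "z \<noteq> 0" "cmod z \<noteq> 1" shows "cmod (z + 1 / cnj z) > 2"
proof -
  define r where "r = cmod z"
  have r: "r > 0" "r \<noteq> 1" using assms by (auto simp: r_def)
  have "z * cnj z = (complex_of_real r)^2" by (simp add: r_def of_real_cmod_sq)
  hence "1 / cnj z = z / (complex_of_real r)^2" using assms(1) r(1) by (simp add: field_simps)
  hence "z + 1 / cnj z = z * complex_of_real (1 + 1 / r^2)" by (simp add: field_simps)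
  hence "cmod (z + 1 / cnj z) = r * (1 + 1 / r^2)"
    using r by (simp only: norm_mult norm_of_real r_def[symmetric]) simp
  also have "\<dots> = r + 1 / r" using r by (simp add: field_simps power2_eq_square)
  finally have eq: "cmod (z + 1 / cnj z) = r + 1 / r" .
  have "(r - 1)^2 > 0" using r by simp
  hence "r^2 + 1 > 2*r" by (simp add: power2_eq_square algebra_simps)
  hence "r + 1 / r > 2" using r by (simp add: field_simps power2_eq_square)
  thus ?thesis using eq by simp
qed

text \<open>Conversely, if |s| \<le> 2, |p| = 1 and s = cnj(s) p, both roots of z^2 - s z + p lie on
  the circle: a root off the circle would have its reflection as the other root, forcing
  |s| > 2.\<close>
lemma bGamma_sufficient:
  assumes s: "cmod s \<le> 2" and p: "cmod p = 1" and e: "s = cnj s * p"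
  shows "\<exists>z1 z2. cmod z1 = 1 \<and> cmod z2 = 1 \<and> s = z1 + z2 \<and> p = z1 * z2"
proof -
  obtain z1 where r: "1 * z1^2 + (-s) * z1 + p = 0" using complex_quadratic_root[of 1 "-s" p] by auto
  define z2 where "z2 = s - z1"
  have sp: "s = z1 + z2" "p = z1 * z2" using r by (auto simp: z2_def power2_eq_square algebra_simps)
  have z0: "z1 \<noteq> 0" "z2 \<noteq> 0" using p sp by auto
  have z1u: "cmod z1 = 1"
  proof (rule ccontr)
    assume ne: "cmod z1 \<noteq> 1"
    have factor: "(w - z1) * (w - z2) = w^2 - s*w + p" for w
      using sp by (simp add: algebra_simps power2_eq_square)
    have "z1^2 - s*z1 + p = 0" using r by simp
    hence "(1 / cnj z1 - z1) * (1 / cnj z1 - z2) = 0"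
      unfolding factor using reflected_root[OF p e _ z0(1)] by blast
    moreover have "1 / cnj z1 \<noteq> z1"
    proof
      assume "1 / cnj z1 = z1"
      hence "1 / cmod z1 = cmod z1" by (metis complex_mod_cnj norm_divide norm_one)
      hence "(cmod z1)^2 = 1" using z0(1) by (simp add: field_simps power2_eq_square)
      thus False using ne by (smt (verit) norm_ge_zero power2_eq_1_iff)
    qed
    ultimately have "z2 = 1 / cnj z1" by simp
    hence "cmod s > 2" using norm_add_reflection[OF z0(1) ne] sp by simp
    thus False using s by simp
  qed
  moreover have "cmod z2 = 1" using p sp z1u by (simp add: norm_mult)
  ultimately show ?thesis using sp by blast
qed

lemma bGamma_iff: "(s,p) \<in> bGamma \<longleftrightarrow> cmod s \<le> 2 \<and> cmod p = 1 \<and> s = cnj s * p"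
proof
  assume "(s,p) \<in> bGamma"
  then obtain z1 z2 where "s = z1+z2" "p = z1*z2" "cmod z1 = 1" "cmod z2 = 1"
    by (auto simp: bGamma_def)
  thus "cmod s \<le> 2 \<and> cmod p = 1 \<and> s = cnj s * p" using bGamma_necessary by blast
next
  assume "cmod s \<le> 2 \<and> cmod p = 1 \<and> s = cnj s * p"
  then obtain z1 z2 where "cmod z1 = 1" "cmod z2 = 1" "s = z1 + z2" "p = z1 * z2"
    using bGamma_sufficient by blast
  thus "(s,p) \<in> bGamma" unfolding bGamma_def by blast
qed

lemma K0_eq: "K0 = {(a, s, p). cmod s \<le> 2 \<and> cmod p = 1 \<and> s = cnj s * p \<and>
                                cmod a = sqrt (1 - (cmod s)\<^sup>2 / 4)}"
  unfolding K0_def using bGamma_iff by blast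

text \<open>Over (z1 + z2, z1 z2) the circle of K0 has radius sqrt(1 - |s|^2/4) = |z1 - z2|/2.\<close>
lemma one_minus_quarter_norm_sum:
  assumes "cmod z1 = 1" "cmod z2 = 1"
  shows "1 - (cmod (z1+z2))^2/4 = (cmod (z1-z2) / 2)^2"
  using parallelogram_law[of z1 z2] assms by (simp add: power_divide)

lemma unit_pair_with_product:
  assumes "cmod q \<le> 1/2" shows "\<exists>x1 x2. unit_pair x1 x2 \<and> cnj x1 * x2 = q"
proof -
  have q2: "4*(cmod q)^2 \<le> 1"
    using power_mono[OF assms norm_ge_zero, of 2] by (simp add: power_divide)
  define D where "D = sqrt (1 - 4*(cmod q)^2)"
  have D: "0 \<le> D" "D^2 = 1 - 4*(cmod q)^2" using q2 by (auto simp: D_def)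
  define t where "t = sqrt ((1 + D)/2)"
  have t: "t > 0" "t^2 = (1+D)/2" using D by (auto simp: t_def)
  have "t^2 * t^2 + (cmod q)^2 = t^2"
    unfolding t(2) using D(2) by (simp add: power2_eq_square field_simps)
  hence "t^2 + (cmod q)^2 / t^2 = 1" using t(1) by (simp add: field_simps power2_eq_square)
  hence "unit_pair (complex_of_real t) (q / complex_of_real t)"
    unfolding unit_pair_def using t(1) by (simp add: norm_divide power_divide)
  moreover have "cnj (complex_of_real t) * (q / complex_of_real t) = q" using t(1) by simp
  ultimately show ?thesis by blast
qed

text \<open>Over a point of bGamma the closure of P contains the whole disc |w| \<le> |z1 - z2|/2:
  take X = Y unitary with cnj(x1) x2 = w/(z1 - z2) in Y diag(z1,z2) X^*.\<close>
lemma fibre_in_closure_Pent: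
  assumes z: "cmod z1 = 1" "cmod z2 = 1" and w: "cmod w \<le> cmod (z1 - z2) / 2"
  shows "(w, z1+z2, z1*z2) \<in> closure Pent"
proof -
  define q where "q = (if z1 = z2 then 0 else w / (z1 - z2))"
  have "cmod q \<le> 1/2" using w by (auto simp: q_def norm_divide divide_le_eq)
  then obtain x1 x2 where x: "unit_pair x1 x2" "cnj x1 * x2 = q"
    using unit_pair_with_product by blast
  have "w = (z1 - z2) * (cnj x1 * x2)" using w x(2) by (auto simp: q_def)
  hence "piP (svd_matrix x1 x2 x1 x2 z1 z2) = (w, z1+z2, z1*z2)"
    using unit_pair_mult_cnj[OF x(1)] by (simp add: piP_svd_matrix[OF x(1) x(1)] algebra_simps)
  moreover have "svd_matrix x1 x2 x1 x2 z1 z2 \<in> contractions"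
    using svd_matrix_contraction x(1) z by simp
  ultimately show ?thesis unfolding closure_Pent_eq by (metis image_eqI)
qed

text \<open>K0 consists of the boundary circles of these discs.\<close>
lemma K0_subset_closure_Pent: "K0 \<subseteq> closure Pent"
proof
  fix k assume "k \<in> K0"
  then obtain a s p where k: "k = (a,s,p)" "(s,p) \<in> bGamma" "cmod a = sqrt (1 - (cmod s)^2/4)"
    by (auto simp: K0_def)
  then obtain z1 z2 where z: "cmod z1 = 1" "cmod z2 = 1" "s = z1+z2" "p = z1*z2"
    by (auto simp: bGamma_def)
  have "cmod a = cmod (z1 - z2) / 2" using k(3) one_minus_quarter_norm_sum[OF z(1,2)] z(3) by simp
  thus "k \<in> closure Pent" using fibre_in_closure_Pent[OF z(1,2)] k(1) z(3,4) by simp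
qed

section \<open>K0 is a closed boundary\<close>

text \<open>The union of the discs |w|^2 + |s|^2/4 \<le> 1 in the fibres over bGamma; it contains
  pi of every matrix Y diag(z1,z2) X^* with |z1| = |z2| = 1.\<close>
definition K0_discs :: "c3 set" where
  "K0_discs = {(w,s,p). (s,p) \<in> bGamma \<and> (cmod w)^2 + (cmod s)^2/4 \<le> 1}"

lemma svd_matrix_unimodular_in_K0_discs:
  assumes x: "unit_pair x1 x2" and y: "unit_pair y1 y2" and z: "cmod z1 = 1" "cmod z2 = 1"
  shows "piP (svd_matrix x1 x2 y1 y2 z1 z2) \<in> K0_discs"
proof -
  define c where "c = y1*cnj x1 + y2*cnj x2"
  define w s p where "w = z1*y2*cnj x1 - z2*cnj y1*x2" and "s = z1 * c + z2 * cnj c" and "p = z1*z2"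
  have wsp: "piP (svd_matrix x1 x2 y1 y2 z1 z2) = (w,s,p)"
    using piP_svd_matrix[OF x y] by (simp add: w_def s_def p_def c_def)
  have "cnj s * p = (cnj z1 * z1) * (z2 * cnj c) + (cnj z2 * z2) * (z1 * c)"
    by (simp add: s_def p_def algebra_simps)
  also have "\<dots> = s"
    using unimodular_mult_cnj[OF z(1)] unimodular_mult_cnj[OF z(2)] by (simp add: s_def mult.commute)
  finally have "s = cnj s * p" by simp
  moreover have "cmod p = 1" using z by (simp add: p_def norm_mult)
  moreover have "svd_matrix x1 x2 y1 y2 z1 z2 \<in> contractions"
    using svd_matrix_contraction[OF x y] z by simp
  ultimately show ?thesis
    using contraction_image_bounds[OF _ wsp] wsp bGamma_iff by (simp add: K0_discs_def)
qed

text \<open>A bound for f on K0 extends to K0_discs: the point lies on a disc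
  w \<mapsto> (R w, s, p) of radius R = sqrt(1 - |s|^2/4) whose boundary circle lies in K0.\<close>
lemma K0_bound_on_K0_discs:
  assumes f: "f \<in> AP" and B: "\<And>k. k \<in> K0 \<Longrightarrow> cmod (f k) \<le> B" and q: "(w,s,p) \<in> K0_discs"
  shows "cmod (f (w,s,p)) \<le> B"
proof -
  have sp: "(s,p) \<in> bGamma" and wb: "(cmod w)^2 + (cmod s)^2/4 \<le> 1"
    using q by (auto simp: K0_discs_def)
  obtain z1 z2 where z: "cmod z1 = 1" "cmod z2 = 1" "s = z1 + z2" "p = z1 * z2"
    using sp by (auto simp: bGamma_def)
  define R where "R = cmod (z1 - z2) / 2"
  have R0: "R \<ge> 0" by (simp add: R_def)
  have Rs: "1 - (cmod s)^2/4 = R^2" using one_minus_quarter_norm_sum[OF z(1,2)] z(3) by (simp add: R_def)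
  hence "(cmod w)^2 \<le> R^2" using wb by linarith
  hence wR: "cmod w \<le> R" using R0 by (rule power2_le_imp_le)
  have on_K0: "(u,s,p) \<in> K0" if "cmod u = R" for u
    using that sp Rs R0 by (simp add: K0_def)
  show ?thesis
  proof (cases "R = 0")
    case True
    thus ?thesis using wR on_K0[of w] B by simp
  next
    case False
    hence Rp: "R > 0" using R0 by simp
    let ?\<phi> = "\<lambda>z. (complex_of_real R * z, s, p)"
    have "cmod (f (?\<phi> (w / of_real R))) \<le> B"
    proof (rule disc_maximum_principle[OF f, where \<phi> = ?\<phi>])
      show "analytic_disc ?\<phi>" by (rule analytic_discI) (auto intro!: holomorphic_intros)
      show "?\<phi> ` cball 0 1 \<subseteq> closure Pent"
        using fibre_in_closure_Pent[OF z(1,2)] z(3,4) R0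
        by (auto simp: norm_mult R_def mult_left_le)
      show "cmod (f (?\<phi> z)) \<le> B" if "z \<in> sphere 0 1" for z
        using that R0 by (intro B on_K0) (simp add: norm_mult)
      show "w / of_real R \<in> cball 0 1" using wR Rp by (simp add: norm_divide divide_le_eq)
    qed
    thus ?thesis using Rp by simp
  qed
qed

text \<open>A bound for f on K0_discs extends to the closure of P.  Write the point as
  pi(Y diag(s1,s2) X^*); the disc z \<mapsto> pi(Y diag(z,z2) X^*) with |z2| = 1 has its boundary
  circle in K0_discs, which bounds f at z = s1; then the disc z \<mapsto> pi(Y diag(s1,z) X^*)
  has its boundary circle in the points just bounded.\<close>
lemma K0_discs_bound_on_closure:
  assumes f: "f \<in> AP" and B: "\<And>q. q \<in> K0_discs \<Longrightarrow> cmod (f q) \<le> B"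
    and x: "x \<in> closure Pent"
  shows "cmod (f x) \<le> B"
proof -
  obtain A where A: "A \<in> contractions" "x = piP A" using x unfolding closure_Pent_eq by auto
  obtain x1 x2 y1 y2 s1 s2 where sv: "unit_pair x1 x2" "unit_pair y1 y2"
    "cmod s1 \<le> 1" "cmod s2 \<le> 1" "A = svd_matrix x1 x2 y1 y2 s1 s2"
    by (rule contraction_svd[OF A(1)])
  define \<phi> where "\<phi> z1 z2 = piP (svd_matrix x1 x2 y1 y2 z1 z2)" for z1 z2
  have disc1: "analytic_disc (\<lambda>z. \<phi> z z2)" and disc2: "analytic_disc (\<lambda>z. \<phi> z1 z)" for z1 z2
    unfolding \<phi>_def piP_svd_matrix[OF sv(1,2)]
    by (rule analytic_discI; intro holomorphic_intros)+
  have in_closure: "\<phi> z1 z2 \<in> closure Pent" if "cmod z1 \<le> 1" "cmod z2 \<le> 1" for z1 z2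
    using svd_matrix_contraction[OF sv(1,2) that] unfolding \<phi>_def closure_Pent_eq by blast
  have first: "cmod (f (\<phi> s1 z2)) \<le> B" if z2: "cmod z2 = 1" for z2
  proof (rule disc_maximum_principle[OF f disc1[of z2]])
    show "(\<lambda>z. \<phi> z z2) ` cball 0 1 \<subseteq> closure Pent" using in_closure z2 by auto
    show "cmod (f (\<phi> z z2)) \<le> B" if "z \<in> sphere 0 1" for z
      using that z2 B svd_matrix_unimodular_in_K0_discs[OF sv(1,2)] by (simp add: \<phi>_def)
  qed (use sv(3) in simp)
  have "cmod (f (\<phi> s1 s2)) \<le> B"
  proof (rule disc_maximum_principle[OF f disc2[of s1]])
    show "(\<lambda>z. \<phi> s1 z) ` cball 0 1 \<subseteq> closure Pent" using in_closure sv(3) by auto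
    show "cmod (f (\<phi> s1 z)) \<le> B" if "z \<in> sphere 0 1" for z using that first by simp
  qed (use sv(4) in simp)
  thus ?thesis using A(2) sv(5) by (simp add: \<phi>_def)
qed

lemma compact_K0: "compact K0"
proof -
  have "K0 = {x. cmod (fst (snd x)) \<le> 2 \<and> cmod (snd (snd x)) = 1 \<and>
                fst (snd x) = cnj (fst (snd x)) * snd (snd x) \<and>
                cmod (fst x) = sqrt (1 - (cmod (fst (snd x)))\<^sup>2 / 4)}"
    unfolding K0_eq by auto
  moreover have "closed \<dots>"
    by (intro closed_Collect_conj closed_Collect_le closed_Collect_eq continuous_intros) auto
  ultimately have "closed K0" by simp
  moreover have "bounded K0"
    using K0_subset_closure_Pent compact_closure_Pent bounded_subset compact_imp_bounded by blast
  ultimately show ?thesis by (simp add: compact_eq_bounded_closed)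
qed

lemma closed_boundary_K0: "closed_boundary K0"
  unfolding closed_boundary_def
proof (intro conjI ballI)
  show "closed K0" using compact_K0 compact_imp_closed by blast
  show "K0 \<subseteq> closure Pent" by (rule K0_subset_closure_Pent)
  fix f assume f: "f \<in> AP"
  have "(0,2,1) \<in> K0"
    using bGamma_iff[of 2 1] by (simp add: K0_def)
  moreover have "continuous_on K0 (\<lambda>x. cmod (f x))"
    using f K0_subset_closure_Pent unfolding AP_def by (intro continuous_intros) (auto intro: continuous_on_subset)
  ultimately obtain x where x: "x \<in> K0" "\<And>y. y \<in> K0 \<Longrightarrow> cmod (f y) \<le> cmod (f x)"
    using continuous_attains_sup[OF compact_K0, of "\<lambda>x. cmod (f x)"] by blast
  have "cmod (f y) \<le> cmod (f x)" if "y \<in> closure Pent" for y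
    using K0_discs_bound_on_closure[OF f _ that] K0_bound_on_K0_discs[OF f x(2)] by force
  thus "\<exists>x\<in>K0. \<forall>y\<in>closure Pent. cmod (f y) \<le> cmod (f x)" using x(1) by blast
qed

section \<open>Every point of K0 is a peak point\<close>

definition holo3_at :: "(c3 \<Rightarrow> complex) \<Rightarrow> c3 \<Rightarrow> bool" where
  "holo3_at g z \<longleftrightarrow> (\<exists>L. (g has_derivative L) (at z) \<and> (\<forall>c v. L (c3_scale c v) = c * L v))"

lemma holo3_on_iff_at: "holo3_on g U \<longleftrightarrow> (\<forall>z\<in>U. holo3_at g z)"
  by (simp add: holo3_on_def holo3_at_def)

lemma holo3_at_const: "holo3_at (\<lambda>_. k) z"
  unfolding holo3_at_def by (intro exI[of _ "\<lambda>_. 0"]) (auto intro: derivative_intros)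

lemma holo3_at_coordinates:
  "holo3_at (\<lambda>x. fst x) z" "holo3_at (\<lambda>x. fst (snd x)) z" "holo3_at (\<lambda>x. snd (snd x)) z"
  unfolding holo3_at_def
  by (rule exI, rule conjI, (rule derivative_eq_intros)+, auto simp: c3_scale_def)+

lemma holo3_at_add: "holo3_at f z \<Longrightarrow> holo3_at g z \<Longrightarrow> holo3_at (\<lambda>x. f x + g x) z"
  unfolding holo3_at_def
  by (elim exE conjE, rule exI, rule conjI, erule (1) has_derivative_add) (simp add: algebra_simps)

lemma holo3_at_diff: "holo3_at f z \<Longrightarrow> holo3_at g z \<Longrightarrow> holo3_at (\<lambda>x. f x - g x) z"
  unfolding holo3_at_def
  by (elim exE conjE, rule exI, rule conjI, erule (1) has_derivative_diff) (simp add: algebra_simps)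

lemma holo3_at_mult: "holo3_at f z \<Longrightarrow> holo3_at g z \<Longrightarrow> holo3_at (\<lambda>x. f x * g x) z"
  unfolding holo3_at_def
  by (elim exE conjE, rule exI, rule conjI, erule (1) has_derivative_mult) (simp add: algebra_simps)

lemma holo3_at_divide:
  assumes f: "holo3_at f z" and g: "holo3_at g z" and nz: "g z \<noteq> 0"
  shows "holo3_at (\<lambda>x. f x / g x) z"
proof -
  obtain L where L: "(g has_derivative L) (at z)" "\<And>c v. L (c3_scale c v) = c * L v"
    using g unfolding holo3_at_def by blast
  have "((\<lambda>x. inverse (g x)) has_derivative (\<lambda>h. - (inverse (g z) * L h * inverse (g z)))) (at z)"
    by (rule Deriv.has_derivative_inverse[OF nz L(1)])
  hence "holo3_at (\<lambda>x. inverse (g x)) z"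
    unfolding holo3_at_def using L(2) by (intro exI[of _ "\<lambda>h. - (inverse (g z) * L h * inverse (g z))"])
      (simp add: algebra_simps)
  thus ?thesis using f unfolding divide_inverse by (rule holo3_at_mult[rotated])
qed

lemmas holo3_at_intros =
  holo3_at_const holo3_at_coordinates holo3_at_add holo3_at_diff holo3_at_mult holo3_at_divide

lemma eq_if_norm_add_maximal:
  assumes "cmod w1 \<le> r" "cmod w2 \<le> r" "2*r \<le> cmod (w1 + w2)" shows "w1 = w2"
proof -
  have r: "0 \<le> r" using assms(1) norm_ge_zero order_trans by blast
  have "(cmod w1)^2 \<le> r^2" "(cmod w2)^2 \<le> r^2"
    using power_mono[OF assms(1) norm_ge_zero, of 2] power_mono[OF assms(2) norm_ge_zero, of 2] by auto
  moreover have "4*r^2 \<le> (cmod (w1 + w2))^2"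
    using power_mono[OF assms(3), of 2] r by (simp add: power_mult_distrib)
  ultimately have "(cmod (w1-w2))^2 \<le> 0" using parallelogram_law[of w1 w2] by linarith
  thus ?thesis by simp
qed

lemma peaking_average:
  assumes "cmod h \<le> 2" "cmod q \<le> 1" "4 \<le> cmod (h + (1 + q))" shows "h = 2 \<and> q = 1"
proof -
  have "cmod (1 + q) \<le> 2" using norm_triangle_ineq[of 1 q] assms(2) by simp
  hence h: "h = 1 + q" using eq_if_norm_add_maximal[of h 2 "1 + q"] assms by simp
  hence "h + (1 + q) = 2 * (1 + q)" by simp
  hence "4 \<le> 2 * cmod (1 + q)" using assms(3) by (simp only: norm_mult norm_numeral)
  hence "2 * 1 \<le> cmod (1 + q)" by simp
  hence "1 = q" using eq_if_norm_add_maximal[of 1 1 q] assms(2) by simp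
  thus ?thesis using h by simp
qed

text \<open>From a function h of A(P) with |h| \<le> 2 on the closure which equals 2 at u = (a0,s0,p0)
  and nowhere else on the fibre coordinates (a,s), a peak function at u is obtained by
  averaging h with 1 + cnj(p0) p.\<close>
lemma peak_point_from_peaking_function:
  assumes u: "(a0,s0,p0) \<in> closure Pent" and p0: "cmod p0 = 1"
    and hc: "continuous_on (closure Pent) h" and hH: "\<And>z. z \<in> Pent \<Longrightarrow> holo3_at h z"
    and hu: "h (a0,s0,p0) = 2" and hb: "\<And>x. x \<in> closure Pent \<Longrightarrow> cmod (h x) \<le> 2"
    and h2: "\<And>a s p. (a,s,p) \<in> closure Pent \<Longrightarrow> h (a,s,p) = 2 \<Longrightarrow> a = a0 \<and> s = s0"
  shows "peak_point (a0,s0,p0)"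
proof -
  define g where "g x = (h x + (1 + cnj p0 * snd (snd x))) / 4" for x
  have "g \<in> AP" unfolding AP_def holo3_on_iff_at g_def
    by (auto intro!: continuous_intros holo3_at_intros hc hH)
  moreover have "g (a0,s0,p0) = 1"
    using hu unimodular_mult_cnj[OF p0] by (simp add: g_def mult.commute)
  moreover have "cmod (g x) < 1" if x: "x \<in> closure Pent - {(a0,s0,p0)}" for x
  proof (rule ccontr)
    obtain a s p where xe: "x = (a,s,p)" by (cases x)
    have xc: "(a,s,p) \<in> closure Pent" using x xe by simp
    have "cmod (cnj p0 * p) \<le> 1" using closure_Pent_bounds(2)[OF xc] p0 by (simp add: norm_mult)
    moreover assume "\<not> cmod (g x) < 1"
    hence "4 \<le> cmod (h (a,s,p) + (1 + cnj p0 * p))" using xe by (simp add: g_def)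
    ultimately have "h (a,s,p) = 2 \<and> cnj p0 * p = 1" using peaking_average hb[OF xc] by blast
    moreover have "p = p0 * (cnj p0 * p)" using unimodular_mult_cnj[OF p0] by (simp add: mult.assoc)
    ultimately have "a = a0 \<and> s = s0 \<and> p = p0" using h2[OF xc] by simp
    thus False using x xe by simp
  qed
  ultimately show ?thesis unfolding peak_point_def using u by blast
qed

text \<open>Points of K0 with |s0| = 2 (then a0 = 0): the function 1 + cnj(s0) s/4 peaks at s = s0,
  and |a|^2 + |s|^2/4 \<le> 1 forces a = 0 there.\<close>
lemma peak_point_K0_edge:
  assumes u: "(a0,s0,p0) \<in> K0" and s2: "cmod s0 = 2" shows "peak_point (a0,s0,p0)"
proof -
  have p0: "cmod p0 = 1" and a0: "a0 = 0" using u s2 bGamma_iff by (auto simp: K0_def)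
  have S0: "cnj s0 * s0 = 4" using of_real_cmod_sq[of s0] s2 by (simp add: mult.commute)
  show ?thesis
  proof (rule peak_point_from_peaking_function[OF K0_subset_closure_Pent[THEN subsetD, OF u] p0,
         where h = "\<lambda>x. 1 + cnj s0 * fst (snd x) / 4"])
    show "continuous_on (closure Pent) (\<lambda>x. 1 + cnj s0 * fst (snd x) / 4)"
      by (intro continuous_intros) auto
    show "holo3_at (\<lambda>x. 1 + cnj s0 * fst (snd x) / 4) z" for z
      by (intro holo3_at_intros) simp
    show "1 + cnj s0 * fst (snd (a0, s0, p0)) / 4 = 2" using S0 by simp
  next
    fix x assume x: "x \<in> closure Pent"
    have "cmod (cnj s0 * fst (snd x) / 4) \<le> 1"
      using closure_Pent_bounds(3)[of "fst x" "fst (snd x)" "snd (snd x)"] x s2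
      by (simp add: norm_mult norm_divide)
    thus "cmod (1 + cnj s0 * fst (snd x) / 4) \<le> 2" using norm_triangle_ineq[of 1 "cnj s0 * fst (snd x) / 4"]
      by simp
  next
    fix a s p assume x: "(a,s,p) \<in> closure Pent" and h: "1 + cnj s0 * fst (snd (a,s,p)) / 4 = 2"
    hence "cnj s0 * s = 4" by (simp add: field_simps)
    hence "(cnj s0 * s0) * s = s0 * 4" by (metis mult.assoc mult.commute)
    hence ss: "s = s0" using S0 by simp
    have "(cmod a)^2 \<le> 0" using closure_Pent_bounds(1)[OF x] ss s2 by simp
    thus "a = a0 \<and> s = s0" using a0 ss by simp
  qed
qed

lemma norm_one_minus_product_sq:
  "(cmod (1 - cnj s0 * s / 4))^2 = (1 - (cmod s0)^2/4) * (1 - (cmod s)^2/4) + (cmod (s - s0))^2/4"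
  by (rule of_real_eq_iff[where 'a=complex, THEN iffD1],
      unfold of_real_mult of_real_add of_real_diff of_real_power of_real_divide of_real_cmod_sq)
     (simp add: field_simps)

text \<open>Points of K0 with |s0| < 2: the function 2 cnj(a0) a / (1 - cnj(s0) s/4) is bounded
  by 2 by Cauchy-Schwarz against the identity above, with equality only at (a0, s0).\<close>
lemma peak_point_K0_interior:
  assumes u: "(a0,s0,p0) \<in> K0" and s2: "cmod s0 < 2" shows "peak_point (a0,s0,p0)"
proof -
  have p0: "cmod p0 = 1" using u bGamma_iff by (auto simp: K0_def)
  have pos: "1 - (cmod s0)^2/4 > 0"
    using power_strict_mono[OF s2 norm_ge_zero, of 2] by simp
  have A0: "(cmod a0)^2 = 1 - (cmod s0)^2/4" using u pos by (auto simp: K0_def)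
  hence a0nz: "a0 \<noteq> 0" using pos by auto
  define D where "D x = 1 - cnj s0 * fst (snd x) / 4" for x :: c3
  have "D (a0,s0,p0) = of_real (1 - (cmod s0)^2/4)"
    by (simp add: D_def of_real_cmod_sq mult.commute)
  also have "\<dots> = cnj a0 * a0"
    unfolding A0[symmetric] by (simp add: of_real_cmod_sq mult.commute)
  finally have D0: "D (a0,s0,p0) = cnj a0 * a0" .
  have D_bound: "cmod a0 * cmod a \<le> cmod (D (a,s,p))" and D_eq: "cmod a0 * cmod a = cmod (D (a,s,p)) \<Longrightarrow> s = s0"
    if "(a,s,p) \<in> closure Pent" for a s p
  proof -
    have "((cmod a0) * (cmod a))^2 \<le> (1 - (cmod s0)^2/4) * (1 - (cmod s)^2/4)"
      unfolding power_mult_distrib A0 using closure_Pent_bounds(1)[OF that] pos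
      by (intro mult_left_mono) auto
    also have "\<dots> = (cmod (D (a,s,p)))^2 - (cmod (s - s0))^2/4"
      unfolding D_def using norm_one_minus_product_sq[of s0 s] by simp
    finally have ineq: "((cmod a0) * (cmod a))^2 + (cmod (s - s0))^2/4 \<le> (cmod (D (a,s,p)))^2"
      by simp
    hence "((cmod a0) * (cmod a))^2 \<le> (cmod (D (a,s,p)))^2"
      using zero_le_power2[of "cmod (s - s0)"] by linarith
    thus "cmod a0 * cmod a \<le> cmod (D (a,s,p))" by (rule power2_le_imp_le) simp
    assume "cmod a0 * cmod a = cmod (D (a,s,p))"
    hence "(cmod (s - s0))^2 \<le> 0" using ineq by simp
    thus "s = s0" by simp
  qed
  have Dnz: "D x \<noteq> 0" if "x \<in> closure Pent" for x
  proof -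
    have "cmod (cnj s0 * fst (snd x) / 4) \<le> cmod s0 * 2 / 4"
      using closure_Pent_bounds(3)[of "fst x" "fst (snd x)" "snd (snd x)"] that
      by (simp add: norm_mult norm_divide mult_left_mono)
    thus ?thesis using s2 by (auto simp: D_def)
  qed
  show ?thesis
  proof (rule peak_point_from_peaking_function[OF K0_subset_closure_Pent[THEN subsetD, OF u] p0,
         where h = "\<lambda>x. 2 * (cnj a0 * fst x) / D x"])
    show "continuous_on (closure Pent) (\<lambda>x. 2 * (cnj a0 * fst x) / D x)"
      using Dnz unfolding D_def by (intro continuous_intros) auto
    show "holo3_at (\<lambda>x. 2 * (cnj a0 * fst x) / D x) z" if "z \<in> Pent" for z
      using Dnz[of z] that closure_subset unfolding D_def by (intro holo3_at_intros) auto
    show "2 * (cnj a0 * fst (a0, s0, p0)) / D (a0, s0, p0) = 2" using D0 a0nz by simp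
  next
    fix x assume x: "x \<in> closure Pent"
    obtain a s p where xe: "x = (a,s,p)" by (cases x)
    show "cmod (2 * (cnj a0 * fst x) / D x) \<le> 2"
      using D_bound[of a s p] x xe Dnz[OF x] by (simp add: norm_mult norm_divide divide_le_eq)
  next
    fix a s p assume x: "(a,s,p) \<in> closure Pent" and h: "2 * (cnj a0 * fst (a,s,p)) / D (a,s,p) = 2"
    hence e: "cnj a0 * a = D (a,s,p)" using Dnz[OF x] by (simp add: field_simps)
    hence ss: "s = s0" using D_eq[OF x] by (metis complex_mod_cnj norm_mult)
    hence "cnj a0 * a = cnj a0 * a0" using e D0 by (simp add: D_def)
    thus "a = a0 \<and> s = s0" using a0nz ss by simp
  qed
qed

lemma peak_point_K0: "u \<in> K0 \<Longrightarrow> peak_point u"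
  using peak_point_K0_edge peak_point_K0_interior bGamma_iff
  by (cases u) (force simp: K0_def order_le_less)

text \<open>A peak point lies in every closed boundary: the peak function attains its maximum
  modulus 1 only there.\<close>
lemma peak_point_in_closed_boundary:
  assumes C: "closed_boundary C" and u: "peak_point u" shows "u \<in> C"
proof -
  obtain g where g: "g \<in> AP" "g u = 1" "\<forall>x\<in>closure Pent - {u}. cmod (g x) < 1"
    and uc: "u \<in> closure Pent"
    using u unfolding peak_point_def by blast
  obtain x where x: "x \<in> C" "\<forall>y\<in>closure Pent. cmod (g y) \<le> cmod (g x)"
    using C g(1) unfolding closed_boundary_def by blast
  have "x \<in> closure Pent" using x(1) C unfolding closed_boundary_def by blast
  moreover have "1 \<le> cmod (g x)" using x(2) uc g(2) by force
  ultimately have "x = u" using g(3) by force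
  thus ?thesis using x(1) by simp
qed

lemma K0_iff_peak_point: "x \<in> K0 \<longleftrightarrow> peak_point x"
  using peak_point_K0 peak_point_in_closed_boundary[OF closed_boundary_K0] by blast

lemma distinguished_boundary_eq_K0: "distinguished_boundary = K0"
proof -
  have "closed_boundary C \<Longrightarrow> K0 \<subseteq> C" for C
    using peak_point_K0 peak_point_in_closed_boundary by blast
  thus ?thesis unfolding distinguished_boundary_def using closed_boundary_K0
    by (intro the_equality) auto
qed

theorem theorem8p4:
  shows "(\<forall>x::c3. (x \<in> K0 \<longleftrightarrow> peak_point x) \<and> (peak_point x \<longleftrightarrow> x \<in> distinguished_boundary))
     \<and> distinguished_boundary = {(a, s, p). (s, p) \<in> bGamma \<and> cmod a = sqrt (1 - (cmod s)\<^sup>2 / 4)}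
     \<and> distinguished_boundary = {(a, s, p). cmod s \<le> 2 \<and> cmod p = 1 \<and> s = cnj s * p \<and>
                                    cmod a = sqrt (1 - (cmod s)\<^sup>2 / 4)}"
  using K0_iff_peak_point distinguished_boundary_eq_K0 K0_eq unfolding K0_def[symmetric] by simp

end
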